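(* Consider the flat-pricing market described in the context, and assume the network cost coefficient satisfies $\eta<\big(\kappa_{\mathrm{avg}}\,\Phi_{\max}^{1-\theta}\big)^{-1}$. Then: (i) $R(p)$ is unimodal on $[0,p_{\max})$ (i.e., there is $v$ such that $R$ is monotonically increasing for $p\le v$ and monotonically decreasing for $p\ge v$), and the feasible price set $\mathcal P$ is non-empty and connected. (ii) If $R'(p_0)<0$, then the network is opt-saturated and the unique equilibrium price is $p^\star=p_0$, where $$p_0=\Phi_{\max}^{\theta}\left(1-\frac{C_{3g}}{\kappa_{\mathrm{peak}}\,\hat N\,\mathbb E[\Phi]}\right)^{\frac{\theta}{2-\sigma}},\qquad \mathbb E[\Phi]=\tfrac{1-\sigma}{2-\sigma}\Phi_{\max}.$$ (iii) If $R'(p_0)>0$, then the network is opt-unsaturated and the unique equilibrium price $p^\star=p^\star(\kappa_{\mathrm{avg}})$ is the unique solution of $R'(p)=0$ in $(0,p_{\max})$; moreover, viewing $\kappa_{\mathrm{avg}}$ as a variable, $\frac{\partial p^\star(\kappa_{\mathrm{avg}})}{\partial \kappa_{\mathrm{avg}}}>0$.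
   Context: Market model (single cell). There are $\hat N$ users (treated as a continuum of mass $\hat N$) in one base-station cell with capacity $C_{3g}>0$ (traffic volume per time slot), and time slots $t\in T=\{1,\dots,|T|\}$. Each user's daily traffic demand $\Phi$ is random with density $f_\Phi(x)=x^{-\sigma}/Z$ for $0\le x\le\Phi_{\max}$, where $0<\sigma<1$ and $Z=\Phi_{\max}^{1-\sigma}/(1-\sigma)$. All users share a temporal preference $w(t)\ge 0$ with $\sum_{t\in T}w(t)=1$; a user with demand $\Phi$ has per-slot demand $\phi(t)=w(t)\Phi$. The willingness to pay is $\gamma(t)=w(t)^{1-\theta}$ with price sensitivity $\theta\in(0,1)$; a user sending volumes $x(t)\le\phi(t)$ and paying $m$ gets net-utility $\sum_{t}\gamma(t)x(t)^\theta-m$. Offloading indicators: constants $\kappa_{\mathrm{avg}},\kappa_{\mathrm{peak}}\in(0,1]$ (independent of price) such that, if $X_{\rm tot}=\sum_t X(t)$ is the total (cellular+WiFi) traffic sent in the cell in a day, then the total daily cellular (3G) traffic is $\kappa_{\mathrm{avg}}X_{\rm tot}$ and the peak per-slot cellular traffic is $\kappa_{\mathrm{peak}}X_{\rm tot}$. Flat pricing with fee $p\ge0$: a user subscribes iff its net-utility $\Phi^\theta-p$ is positive, i.e. iff $\Phi>p^{1/\theta}$, and a subscriber sends its whole demand, $x(t)=\phi(t)$. Let $p_{\max}=\Phi_{\max}^\theta$ (no subscribers for $p\ge p_{\max}$). The provider's revenue (income minus linear cellular cost with coefficient $\eta>0$ per unit of cellular traffic) is, for $0\le p<p_{\max}$,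 $$R(p)=\hat N\int_{p^{1/\theta}}^{\Phi_{\max}}\big(p-\eta\kappa_{\mathrm{avg}}\Phi\big)f_\Phi(\Phi)\,d\Phi,$$ and $R(p)=0$ for $p\ge p_{\max}$. The peak cellular traffic is $A(p)=\kappa_{\mathrm{peak}}\hat N\int_{p^{1/\theta}}^{\Phi_{\max}}\Phi f_\Phi(\Phi)\,d\Phi$. Feasible price set: $\mathcal P=\{p: R(p)>0,\ A(p)\le C_{3g}\}$; threshold price $p_0=\inf\mathcal P$. An equilibrium price is any $p^\star\in\arg\max_{p\in\mathcal P}R(p)$. The network is saturated at $p$ if $A(p)=C_{3g}$; for a unique equilibrium price $p^\star$, the network is called opt-saturated if it is saturated at $p^\star$ and opt-unsaturated otherwise. *)

theory Defs
  imports "HOL-Analysis.Analysis"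
begin

text \<open>Single-cell flat-pricing market. Parameters:
  N = user mass, C = cellular capacity C_3g, Pm = Phi_max, sg = sigma,
  th = theta, eta = cost coefficient, ka = kappa_avg, kp = kappa_peak.\<close>

definition Zc :: "real \<Rightarrow> real \<Rightarrow> real" where
  "Zc sg Pm = Pm powr (1 - sg) / (1 - sg)"

definition fPhi :: "real \<Rightarrow> real \<Rightarrow> real \<Rightarrow> real" where
  "fPhi sg Pm x = (if 0 \<le> x \<and> x \<le> Pm then x powr (- sg) / Zc sg Pm else 0)"

definition pmax :: "real \<Rightarrow> real \<Rightarrow> real" where
  "pmax th Pm = Pm powr th"

text \<open>Revenue R(p): the integral formula on [0, p_max), zero for p >= p_max
  (prices are nonnegative; the value for p < 0 is irrelevant and set to 0).\<close>
definition Rev :: "real \<Rightarrow> real \<Rightarrow> real \<Rightarrow> real \<Rightarrow> real \<Rightarrow> real \<Rightarrow> real \<Rightarrow> real" where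
  "Rev N sg th Pm eta ka p =
     (if 0 \<le> p \<and> p < pmax th Pm
      then N * integral {p powr (1 / th)..Pm} (\<lambda>x. (p - eta * ka * x) * fPhi sg Pm x)
      else 0)"

definition Apeak :: "real \<Rightarrow> real \<Rightarrow> real \<Rightarrow> real \<Rightarrow> real \<Rightarrow> real \<Rightarrow> real" where
  "Apeak N sg th Pm kp p =
     (if 0 \<le> p then kp * N * integral {p powr (1 / th)..Pm} (\<lambda>x. x * fPhi sg Pm x) else 0)"

definition Feas :: "real \<Rightarrow> real \<Rightarrow> real \<Rightarrow> real \<Rightarrow> real \<Rightarrow> real \<Rightarrow> real \<Rightarrow> real \<Rightarrow> real set" where
  "Feas N C sg th Pm eta ka kp =
     {p. 0 \<le> p \<and> Rev N sg th Pm eta ka p > 0 \<and> Apeak N sg th Pm kp p \<le> C}"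

definition p0 :: "real \<Rightarrow> real \<Rightarrow> real \<Rightarrow> real \<Rightarrow> real \<Rightarrow> real \<Rightarrow> real \<Rightarrow> real \<Rightarrow> real" where
  "p0 N C sg th Pm eta ka kp = Inf (Feas N C sg th Pm eta ka kp)"

definition EqSet :: "real \<Rightarrow> real \<Rightarrow> real \<Rightarrow> real \<Rightarrow> real \<Rightarrow> real \<Rightarrow> real \<Rightarrow> real \<Rightarrow> real set" where
  "EqSet N C sg th Pm eta ka kp =
     {p \<in> Feas N C sg th Pm eta ka kp. \<forall>q \<in> Feas N C sg th Pm eta ka kp.
        Rev N sg th Pm eta ka q \<le> Rev N sg th Pm eta ka p}"

definition eq_price :: "real \<Rightarrow> real \<Rightarrow> real \<Rightarrow> real \<Rightarrow> real \<Rightarrow> real \<Rightarrow> real \<Rightarrow> real \<Rightarrow> real" where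
  "eq_price N C sg th Pm eta ka kp = (THE p. EqSet N C sg th Pm eta ka kp = {p})"

end

theory Submission
  imports Defs
begin

(*
  With p_max = Phi_max^theta and q = p / p_max,
  integrating the power-law demand density gives closed forms
      R(p) = N (p (1 - q^alpha) - eta k E[Phi] (1 - q^beta)),   A(p) = M (1 - q^beta)
  (alpha = (1-sigma)/theta, beta = (2-sigma)/theta).  Substituting w = q^(-gamma),
  gamma = (1-theta)/theta, the slope R'(p) has the sign of the convex function
      t_K(w) = w^rho - (1+alpha) w + K,   K = k eta (1-sigma) Phi_max^(1-theta) / theta,
  which has a unique root w*(K) > 1 because the hypothesis on eta means K < alpha,
  i.e. t_K(1) < 0.
  Hence R rises up to v = p_max w*^(-1/gamma) and falls afterwards; the feasible set is
  an interval [max(break-even price, capacity price), p_max); its left end p_0 is optimal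
  when R'(p_0) < 0 and v is optimal when R'(p_0) > 0.  Finally w*(K) is differentiable
  with negative slope (inverse function theorem), so v increases with k.
*)

lemma powr_above_tangent:
  fixes rho w z :: real
  assumes "1 \<le> rho" "0 < w" "0 < z"
  shows "z powr rho - w powr rho \<ge> rho * w powr (rho - 1) * (z - w)"
  using assms by (intro convex_on_imp_above_tangent[where A = "{0<..}"] powr_convex)
    (auto intro!: derivative_eq_intros simp: interior_open)

lemma powr_has_integral:
  fixes a b s :: real
  assumes "0 \<le> a" "a \<le> b" "0 < s + 1"
  shows "((\<lambda>x. x powr s) has_integral (b powr (s+1) - a powr (s+1)) / (s+1)) {a..b}"
proof -
  let ?F = "\<lambda>x. x powr (s + 1) / (s + 1)"
  have "((\<lambda>x. x powr s) has_integral (?F b - ?F a)) {a..b}"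
  proof (rule fundamental_theorem_of_calculus_interior[OF assms(2)])
    show "continuous_on {a..b} ?F"
      using assms by (intro continuous_on_divide continuous_on_powr' continuous_intros) auto
    fix x assume "x \<in> {a<..<b}"
    then have "(?F has_real_derivative x powr s) (at x)"
      using assms by (auto intro!: derivative_eq_intros)
    then show "(?F has_vector_derivative x powr s) (at x)"
      by (simp add: has_real_derivative_iff_has_vector_derivative)
  qed
  then show ?thesis by (simp add: diff_divide_distrib)
qed

lemma sgn_powr_neg_diff:
  fixes x y c :: real
  assumes "0 < x" "0 < y" "0 < c"
  shows "sgn (y powr (-c) - x powr (-c)) = sgn (x - y)"
  using assms powr_less_mono2_neg[of "-c" x y] powr_less_mono2_neg[of "-c" y x]
  by (cases x y rule: linorder_cases) auto

lemma powr_le_iff_base: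
  fixes x y c :: real
  assumes "0 \<le> x" "0 \<le> y" "0 < c"
  shows "x powr c \<le> y powr c \<longleftrightarrow> x \<le> y"
  using assms by (meson not_less powr_less_mono2 powr_mono2 less_imp_le)

section \<open>Moments of the truncated power-law demand\<close>

definition mean_demand :: "real \<Rightarrow> real \<Rightarrow> real" where
  "mean_demand sg Pm = (1 - sg) / (2 - sg) * Pm"

lemma fPhi_on_support:
  assumes "0 \<le> x" "x \<le> Pm"
  shows "fPhi sg Pm x = x powr (-sg) / Zc sg Pm"
    and "x * fPhi sg Pm x = x powr (1 - sg) / Zc sg Pm"
proof -
  show "fPhi sg Pm x = x powr (-sg) / Zc sg Pm" using assms by (simp add: fPhi_def)
  have "x powr (1 - sg) = x * x powr (-sg)"
    using assms powr_add[of x 1 "-sg"] by (cases "x = 0") auto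
  then show "x * fPhi sg Pm x = x powr (1 - sg) / Zc sg Pm" using assms by (simp add: fPhi_def)
qed

lemma fPhi_tail_mass:
  assumes sg: "sg < 1" and Pm: "0 < Pm" and a: "0 \<le> a" "a \<le> Pm"
  shows "(fPhi sg Pm has_integral 1 - (a / Pm) powr (1 - sg)) {a..Pm}"
proof -
  have "((\<lambda>x. x powr (-sg) / Zc sg Pm) has_integral
        (Pm powr (1 - sg) - a powr (1 - sg)) / (1 - sg) / Zc sg Pm) {a..Pm}"
    using powr_has_integral[OF a, of "-sg"] sg by (intro has_integral_divide) simp
  moreover have "(Pm powr (1 - sg) - a powr (1 - sg)) / (1 - sg) / Zc sg Pm
                 = 1 - (a / Pm) powr (1 - sg)"
    using sg Pm a by (simp add: Zc_def powr_divide field_simps)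
  ultimately have "((\<lambda>x. x powr (-sg) / Zc sg Pm) has_integral 1 - (a / Pm) powr (1 - sg)) {a..Pm}"
    by simp
  then show ?thesis
    by (rule has_integral_eq[rotated]) (use a in \<open>auto simp: fPhi_on_support(1)\<close>)
qed

lemma fPhi_tail_mean:
  assumes sg: "sg < 1" and Pm: "0 < Pm" and a: "0 \<le> a" "a \<le> Pm"
  shows "((\<lambda>x. x * fPhi sg Pm x) has_integral
          mean_demand sg Pm * (1 - (a / Pm) powr (2 - sg))) {a..Pm}"
proof -
  have "((\<lambda>x. x powr (1 - sg) / Zc sg Pm) has_integral
        (Pm powr (2 - sg) - a powr (2 - sg)) / (2 - sg) / Zc sg Pm) {a..Pm}"
    using powr_has_integral[OF a, of "1 - sg"] sg by (intro has_integral_divide) simp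
  moreover have "Pm powr (2 - sg) = Pm * Pm powr (1 - sg)"
    using Pm powr_add[of Pm 1 "1 - sg"] by simp
  then have "(Pm powr (2 - sg) - a powr (2 - sg)) / (2 - sg) / Zc sg Pm
             = mean_demand sg Pm * (1 - (a / Pm) powr (2 - sg))"
    using sg Pm a by (simp add: Zc_def mean_demand_def powr_divide field_simps)
  ultimately have "((\<lambda>x. x powr (1 - sg) / Zc sg Pm) has_integral
                     mean_demand sg Pm * (1 - (a / Pm) powr (2 - sg))) {a..Pm}"
    by simp
  then show ?thesis
    by (rule has_integral_eq[rotated]) (use a in \<open>auto simp: fPhi_on_support(2)\<close>)
qed

lemma EqSet_eq_singleton:
  assumes "p \<in> Feas N C sg th Pm eta k kp"
    and "\<And>q. q \<in> Feas N C sg th Pm eta k kp \<Longrightarrow> q \<noteq> p \<Longrightarrow>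
            Rev N sg th Pm eta k q < Rev N sg th Pm eta k p"
  shows "EqSet N C sg th Pm eta k kp = {p}"
  using assms unfolding EqSet_def by (force simp: less_le_not_le)

section \<open>The convex root function\<close>

locale convex_root =
  fixes rho c :: real
  assumes rho_gt1: "1 < rho" and c_gt1: "1 < c"
begin

definition tfun :: "real \<Rightarrow> real \<Rightarrow> real" where
  "tfun K w = w powr rho - c * w + K"

definition root :: "real \<Rightarrow> real" where
  "root K = (THE w. 1 < w \<and> tfun K w = 0)"

lemma tfun_at_1: "tfun K 1 = K - (c - 1)"
  unfolding tfun_def by simp

lemma tfun_continuous: "continuous_on {0<..} (tfun K)"
  unfolding tfun_def using rho_gt1 by (intro continuous_intros) auto

lemma tfun_above_tangent:
  assumes "0 < w" "0 < z"
  shows "tfun K z - tfun K w \<ge> (rho * w powr (rho - 1) - c) * (z - w)"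
  using powr_above_tangent[of rho w z] assms rho_gt1 unfolding tfun_def
  by (simp add: algebra_simps)

text \<open>Convexity pins down the sign of t_K around any root above 1.\<close>
lemma tfun_sign_around_root:
  assumes K: "K < c - 1" and w1: "1 < w1" and r: "tfun K w1 = 0"
  shows "rho * w1 powr (rho - 1) > c"
    and "\<And>w. w1 < w \<Longrightarrow> tfun K w > 0"
    and "\<And>w. 1 \<le> w \<Longrightarrow> w < w1 \<Longrightarrow> tfun K w < 0"
proof -
  have gap: "(rho * w1 powr (rho - 1) - c) * (w1 - 1) \<ge> c - 1 - K"
    using tfun_above_tangent[of w1 1 K] w1 r tfun_at_1[of K] by (simp add: algebra_simps)
  show slope: "rho * w1 powr (rho - 1) > c"
  proof (rule ccontr)
    assume "\<not> ?thesis"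
    then have "(rho * w1 powr (rho - 1) - c) * (w1 - 1) \<le> 0"
      using w1 by (intro mult_nonpos_nonneg) auto
    then show False using gap K by linarith
  qed
  show "tfun K w > 0" if "w1 < w" for w
  proof -
    have "(rho * w1 powr (rho - 1) - c) * (w - w1) > 0" using slope that by simp
    then show ?thesis using tfun_above_tangent[of w1 w K] w1 that r by linarith
  qed
  show "tfun K w < 0" if w: "1 \<le> w" "w < w1" for w
  proof (rule ccontr)
    assume "\<not> tfun K w < 0"
    then have nonneg: "tfun K w \<ge> 0" by simp
    have "(rho * w powr (rho - 1) - c) * (w - 1) \<ge> tfun K w - tfun K 1"
      using tfun_above_tangent[of w 1 K] w by (simp add: algebra_simps)
    then have "(rho * w powr (rho - 1) - c) * (w - 1) > 0"
      using nonneg tfun_at_1[of K] K by linarith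
    then have "rho * w powr (rho - 1) - c > 0"
      using w by (simp add: zero_less_mult_iff)
    then have "(rho * w powr (rho - 1) - c) * (w1 - w) > 0" using w by simp
    then show False
      using tfun_above_tangent[of w w1 K] w nonneg r by linarith
  qed
qed

lemma tfun_root_exists:
  assumes K: "K < c - 1"
  shows "\<exists>w. 1 < w \<and> tfun K w = 0"
proof -
  define W where "W = (1 + c + \<bar>K\<bar>) powr (1 / (rho - 1))"
  have W1: "W \<ge> 1" unfolding W_def using rho_gt1 c_gt1 by (intro ge_one_powr_ge_zero) auto
  have "W powr (rho - 1) = 1 + c + \<bar>K\<bar>"
    unfolding W_def using rho_gt1 c_gt1 by (simp add: powr_powr)
  then have "W powr rho = W * (1 + c + \<bar>K\<bar>)"
    using powr_add[of W "rho - 1" 1] W1 by simp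
  then have "tfun K W = W * (1 + \<bar>K\<bar>) + K" unfolding tfun_def by (simp add: algebra_simps)
  moreover have "W * (1 + \<bar>K\<bar>) \<ge> 1 + \<bar>K\<bar>"
    using W1 mult_right_mono[of 1 W "1 + \<bar>K\<bar>"] by simp
  ultimately have "tfun K W > 0" using abs_ge_minus_self[of K] by linarith
  moreover have "tfun K 1 < 0" using tfun_at_1 K by simp
  ultimately obtain x where "1 \<le> x" "x \<le> W" "tfun K x = 0"
    using IVT'[of "tfun K" 1 0 W] W1 continuous_on_subset[OF tfun_continuous, of "{1..W}" K]
    by force
  moreover from this have "x \<noteq> 1" using \<open>tfun K 1 < 0\<close> by auto
  ultimately show ?thesis by force
qed

lemma root:
  assumes K: "K < c - 1"
  shows root_gt1: "1 < root K" and root_eq: "tfun K (root K) = 0"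
    and root_slope: "rho * root K powr (rho - 1) > c"
    and root_unique: "\<And>w. 1 < w \<Longrightarrow> tfun K w = 0 \<Longrightarrow> w = root K"
proof -
  obtain w1 where w1: "1 < w1" "tfun K w1 = 0" using tfun_root_exists[OF K] by blast
  have uniq: "w = w1" if "1 < w" "tfun K w = 0" for w
    using tfun_sign_around_root(2)[OF K w1, of w] tfun_sign_around_root(3)[OF K w1, of w] that
    by (cases w w1 rule: linorder_cases) auto
  have "root K = w1" unfolding root_def
    by (rule the_equality) (use w1 uniq in blast)+
  then show "1 < root K" "tfun K (root K) = 0" "rho * root K powr (rho - 1) > c"
    using w1 tfun_sign_around_root(1)[OF K w1] by simp_all
  show "\<And>w. 1 < w \<Longrightarrow> tfun K w = 0 \<Longrightarrow> w = root K"
    using uniq \<open>root K = w1\<close> by blast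
qed

lemma tfun_sgn:
  assumes K: "K < c - 1" and w: "1 \<le> w"
  shows "sgn (tfun K w) = sgn (w - root K)"
  using tfun_sign_around_root(2,3)[OF K root_gt1[OF K] root_eq[OF K], of w] w root_eq[OF K]
  by (cases w "root K" rule: linorder_cases) auto

text \<open>The root solves phi(w) = K for phi(w) = c w - w^rho, which is locally invertible
  since phi'(root K) < 0; the inverse function theorem differentiates root.\<close>
lemma root_deriv:
  assumes K: "K < c - 1"
  shows "(root has_real_derivative inverse (c - rho * root K powr (rho - 1))) (at K)"
proof -
  define phi where "phi w = c * w - w powr rho" for w
  define D where "D = c - rho * root K powr (rho - 1)"
  have D: "D \<noteq> 0" unfolding D_def using root_slope[OF K] by simp
  define S where "S = {1<..} \<inter> phi -` {..<c - 1}"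
  have "continuous_on {1<..} phi"
    unfolding phi_def using rho_gt1 by (intro continuous_intros) auto
  then have "open S"
    unfolding S_def using continuous_open_preimage[of "{1<..}" phi "{..<c - 1}"] by auto
  have phi_root: "phi (root K) = K"
    using root_eq[OF K] unfolding tfun_def phi_def by simp
  have root_in_S: "root K \<in> S" using root_gt1[OF K] K phi_root by (simp add: S_def)
  have cont: "continuous_on S phi"
    unfolding phi_def S_def using rho_gt1 by (intro continuous_intros) auto
  have root_phi: "root (phi z) = z" if "z \<in> S" for z
    using that root_unique[of "phi z" z] unfolding S_def tfun_def phi_def by auto
  have "(phi has_real_derivative D) (at (root K))"
    unfolding phi_def D_def using root_gt1[OF K] by (auto intro!: derivative_eq_intros)
  then have "(root has_derivative (*) (inverse D)) (at (phi (root K)))"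
    using D by (intro has_derivative_inverse_strong[OF \<open>open S\<close> root_in_S cont root_phi])
      (auto simp: has_field_derivative_def fun_eq_iff)
  then show ?thesis using phi_root unfolding D_def by (simp add: has_field_derivative_def)
qed

end

section \<open>The flat-pricing market\<close>

locale flat_market =
  fixes N C Pm sg th eta kp :: real
  assumes N_pos: "N > 0" and C_pos: "C > 0" and Pm_pos: "Pm > 0"
    and sg1: "sg < 1" and th0: "0 < th" and th1: "th < 1"
    and eta_pos: "eta > 0" and kp0: "0 < kp"
begin

text \<open>Exponents of the closed forms, the price cap P = p_max, the mean demand E, the
  peak traffic M when every user subscribes, and the cost scale K1: the argument K of
  the root function is k K1 for offloading factor k.\<close>
definition "P = Pm powr th"
definition "al = (1 - sg) / th"
definition "be = (2 - sg) / th"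
definition "ga = (1 - th) / th"
definition "rho = (2 - sg - th) / (1 - th)"
definition "E = mean_demand sg Pm"
definition "M = kp * N * E"
definition "K1 = eta * (1 - sg) * Pm powr (1 - th) / th"

lemma P_pos: "P > 0" unfolding P_def using Pm_pos by simp
lemma al_pos: "al > 0" unfolding al_def using sg1 th0 by simp
lemma be_gt1: "be > 1" unfolding be_def using sg1 th1 th0 by (simp add: field_simps)
lemma ga_pos: "ga > 0" unfolding ga_def using th1 th0 by simp
lemma E_pos: "E > 0" unfolding E_def mean_demand_def using sg1 Pm_pos by simp
lemma M_pos: "M > 0" unfolding M_def using kp0 N_pos E_pos by simp
lemma K1_pos: "K1 > 0" unfolding K1_def using sg1 Pm_pos th0 eta_pos by simp
lemma pmax_eq: "pmax th Pm = P" unfolding pmax_def P_def ..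

sublocale convex_root rho "1 + al"
  using sg1 th1 al_pos unfolding rho_def by unfold_locales (auto simp: field_simps)

text \<open>The hypothesis of the theorem on eta says exactly that K = k K1 < al, i.e. that
  t_K(1) < 0, which is what the root function needs.\<close>
lemma eta_bound_iff:
  assumes "0 < k"
  shows "eta < 1 / (k * Pm powr (1 - th)) \<longleftrightarrow> k * K1 < al"
proof -
  have "eta < 1 / (k * Pm powr (1 - th)) \<longleftrightarrow> eta * k * Pm powr (1 - th) < 1"
    using assms Pm_pos by (simp add: field_simps)
  also have "\<dots> \<longleftrightarrow> eta * k * Pm powr (1 - th) * ((1 - sg) / th) < 1 * ((1 - sg) / th)"
    by (rule mult_less_cancel_right_pos[symmetric]) (use sg1 th0 in simp)
  also have "\<dots> \<longleftrightarrow> k * K1 < al" unfolding K1_def al_def by (simp add: field_simps)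
  finally show ?thesis .
qed

definition "rev_curve k p = N * (p * (1 - (p/P) powr al) - eta * k * E * (1 - (p/P) powr be))"
definition "rev_slope k p = N * (1 - (1 + al) * (p/P) powr al + k * K1 * (p/P) powr (be - 1))"
definition "peak_curve p = M * (1 - (p/P) powr be)"
definition "pcap = (if C < M then P * (1 - C/M) powr (1/be) else 0)"

text \<open>The subscription threshold p^(1/theta), measured in units of Phi_max.\<close>
lemma threshold_ratio: "0 \<le> p \<Longrightarrow> p powr (1/th) / Pm = (p/P) powr (1/th)"
  unfolding P_def using Pm_pos th0 by (simp add: powr_divide powr_powr)

lemma threshold_le: "0 \<le> p \<Longrightarrow> p \<le> P \<Longrightarrow> p powr (1/th) \<le> Pm"
  using powr_mono2[of "1/th" p P] th0 Pm_pos unfolding P_def by (simp add: powr_powr)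

text \<open>Revenue on [0, P) integrates price minus cost against the tail of the density:
  price times tail mass minus cost times tail mean.\<close>
lemma Rev_closed:
  assumes "0 \<le> p" "p < P"
  shows "Rev N sg th Pm eta k p = rev_curve k p"
proof -
  define a where "a = p powr (1/th)"
  have a: "0 \<le> a" "a \<le> Pm" unfolding a_def using assms threshold_le by auto
  have ratio: "(a / Pm) powr s = (p/P) powr (s / th)" for s
    unfolding a_def threshold_ratio[OF assms(1)] by (simp add: powr_powr)
  have "((\<lambda>x. p * fPhi sg Pm x - eta * k * (x * fPhi sg Pm x)) has_integral
         p * (1 - (a / Pm) powr (1 - sg)) - eta * k * (E * (1 - (a / Pm) powr (2 - sg)))) {a..Pm}"
    unfolding E_def using fPhi_tail_mass[OF sg1 Pm_pos a] fPhi_tail_mean[OF sg1 Pm_pos a]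
    by (intro has_integral_diff has_integral_mult_right)
  then have "integral {a..Pm} (\<lambda>x. (p - eta * k * x) * fPhi sg Pm x)
             = p * (1 - (p/P) powr al) - eta * k * E * (1 - (p/P) powr be)"
    unfolding ratio al_def be_def by (simp add: integral_unique algebra_simps)
  then show ?thesis
    unfolding Rev_def rev_curve_def a_def pmax_eq using assms by simp
qed

lemma Rev_outside: "\<not> (0 \<le> p \<and> p < P) \<Longrightarrow> Rev N sg th Pm eta k p = 0"
  unfolding Rev_def pmax_eq by auto

lemma Apeak_closed:
  assumes "0 \<le> p" "p \<le> P"
  shows "Apeak N sg th Pm kp p = peak_curve p"
proof -
  define a where "a = p powr (1/th)"
  have a: "0 \<le> a" "a \<le> Pm" unfolding a_def using assms threshold_le by auto
  have "(a / Pm) powr (2 - sg) = (p/P) powr be"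
    unfolding a_def threshold_ratio[OF assms(1)] be_def by (simp add: powr_powr)
  then show ?thesis
    using integral_unique[OF fPhi_tail_mean[OF sg1 Pm_pos a]] assms
    unfolding Apeak_def peak_curve_def M_def E_def a_def by simp
qed

text \<open>Above P the subscription threshold exceeds Phi_max: there is no traffic.\<close>
lemma Apeak_above_P: "P < p \<Longrightarrow> Apeak N sg th Pm kp p = 0"
  using powr_less_mono2[of "1/th" P p] th0 P_pos Pm_pos
  unfolding Apeak_def P_def by (simp add: powr_powr)

lemma pcap_nonneg: "0 \<le> pcap" unfolding pcap_def using P_pos by simp

lemma pcap_lt_P: "pcap < P"
  using powr_less_mono2[of "1/be" "1 - C/M" 1] be_gt1 C_pos M_pos P_pos
  unfolding pcap_def by (auto simp: field_simps)

lemma peak_curve_vs_C: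
  assumes CM: "C < M" and p: "0 \<le> p"
  shows "peak_curve p \<le> C \<longleftrightarrow> pcap \<le> p" and "peak_curve p < C \<longleftrightarrow> pcap < p"
proof -
  define u where "u = (1 - C/M) powr (1/be)"
  have u: "0 \<le> u" "u powr be = 1 - C/M"
    unfolding u_def using CM C_pos M_pos be_gt1 by (auto simp: powr_powr field_simps)
  have pcap: "pcap = P * u" unfolding pcap_def u_def using CM by simp
  have "peak_curve p \<le> C \<longleftrightarrow> u powr be \<le> (p/P) powr be"
    unfolding peak_curve_def u using M_pos by (simp add: field_simps)
  also have "\<dots> \<longleftrightarrow> u \<le> p/P"
    using powr_le_iff_base[of u "p/P" be] u(1) p P_pos be_gt1 by simp
  also have "\<dots> \<longleftrightarrow> pcap \<le> p" unfolding pcap using P_pos by (simp add: field_simps)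
  finally show "peak_curve p \<le> C \<longleftrightarrow> pcap \<le> p" .
  have "peak_curve p < C \<longleftrightarrow> u powr be < (p/P) powr be"
    unfolding peak_curve_def u using M_pos by (simp add: field_simps)
  also have "\<dots> \<longleftrightarrow> u < p/P"
    using powr_le_iff_base[of "p/P" u be] u(1) p P_pos be_gt1 by (simp add: not_le[symmetric])
  also have "\<dots> \<longleftrightarrow> pcap < p" unfolding pcap using P_pos by (simp add: field_simps)
  finally show "peak_curve p < C \<longleftrightarrow> pcap < p" .
qed

lemma Apeak_le_iff:
  assumes p: "0 \<le> p"
  shows "Apeak N sg th Pm kp p \<le> C \<longleftrightarrow> pcap \<le> p"
proof (cases "p \<le> P")
  case True
  show ?thesis
  proof (cases "C < M")
    case True
    then show ?thesis using peak_curve_vs_C(1) Apeak_closed p \<open>p \<le> P\<close> by simp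
  next
    case False
    have "peak_curve p \<le> M" unfolding peak_curve_def using M_pos by (simp add: mult_left_le)
    then show ?thesis using False p Apeak_closed[OF p True] unfolding pcap_def by simp
  qed
next
  case False
  then show ?thesis using Apeak_above_P pcap_lt_P C_pos by simp
qed

lemma Apeak_lt_C:
  assumes p: "0 < p" "p \<le> P" and pc: "pcap < p"
  shows "Apeak N sg th Pm kp p < C"
proof (cases "C < M")
  case True
  then show ?thesis using peak_curve_vs_C(2) Apeak_closed p pc by simp
next
  case False
  have "peak_curve p < M" unfolding peak_curve_def using M_pos p P_pos by simp
  then show ?thesis using False Apeak_closed p by simp
qed

lemma Apeak_pcap:
  assumes "C < M"
  shows "Apeak N sg th Pm kp pcap = C"
proof -
  have "peak_curve pcap \<le> C" "\<not> peak_curve pcap < C"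
    using peak_curve_vs_C[OF assms pcap_nonneg] by simp_all
  then show ?thesis using Apeak_closed[OF pcap_nonneg less_imp_le[OF pcap_lt_P]] by simp
qed

lemma pcap_formula:
  "C < M \<Longrightarrow> pcap = Pm powr th * (1 - C / (kp * N * ((1 - sg) / (2 - sg) * Pm))) powr (th / (2 - sg))"
  unfolding pcap_def M_def E_def mean_demand_def P_def be_def by simp

lemma rev_curve_deriv:
  assumes p: "0 < p"
  shows "(rev_curve k has_real_derivative rev_slope k p) (at p)"
proof -
  have q: "p/P > 0" using p P_pos by simp
  have shift: "p * (p/P) powr (s - 1) = P * (p/P) powr s" for s
    using powr_add[of "p/P" 1 "s - 1"] q P_pos by (simp add: field_simps)
  have cost: "eta * k * E * be / P = k * K1"
    using Pm_pos sg1 th0 unfolding E_def mean_demand_def be_def K1_def P_def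
    by (simp add: field_simps powr_diff)
  have "p * (al * (p/P) powr (al - 1) / P) = al * (p * (p/P) powr (al - 1)) / P" by simp
  then have income: "p * (al * (p/P) powr (al - 1) / P) = al * (p/P) powr al"
    using P_pos by (simp add: shift)
  have "eta * k * E * (be * (p/P) powr (be - 1) / P) = (eta * k * E * be / P) * (p/P) powr (be - 1)"
    by simp
  then have cost': "eta * k * E * (be * (p/P) powr (be - 1) / P) = k * K1 * (p/P) powr (be - 1)"
    by (simp only: cost)
  have "N * ((1 - (p/P) powr al) - p * (al * (p/P) powr (al - 1) / P)
                  + eta * k * E * (be * (p/P) powr (be - 1) / P)) = rev_slope k p"
    unfolding rev_slope_def income cost' by (simp add: algebra_simps)
  moreover have "(rev_curve k has_real_derivative
      N * ((1 - (p/P) powr al) - p * (al * (p/P) powr (al - 1) / P)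
           + eta * k * E * (be * (p/P) powr (be - 1) / P))) (at p)"
    unfolding rev_curve_def using q by (auto intro!: derivative_eq_intros simp: algebra_simps)
  ultimately show ?thesis by simp
qed

lemma rev_curve_continuous: "continuous_on {0..} (rev_curve k)"
  unfolding rev_curve_def using P_pos al_pos be_gt1
  by (intro continuous_intros continuous_on_powr') auto

lemma Rev_deriv:
  assumes "0 < p" "p < P"
  shows "(Rev N sg th Pm eta k has_real_derivative rev_slope k p) (at p)"
  by (rule has_field_derivative_transform_within_open[OF rev_curve_deriv[of p k]
        open_greaterThanLessThan[of 0 P]])
     (use assms Rev_closed in auto)

definition "vopt k = P * root (k * K1) powr (-1/ga)"

text \<open>Since w* > 1, the price v lies strictly between 0 and P.\<close>
lemma vopt_bounds:
  assumes "k * K1 < al"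
  shows "0 < vopt k" "vopt k < P"
  using powr_less_mono2_neg[of "-1/ga" 1 "root (k*K1)"] root_gt1[of "k*K1"] assms ga_pos P_pos
  unfolding vopt_def by auto

lemma rev_slope_tfun:
  assumes p: "0 < p"
  defines "w \<equiv> (p/P) powr (-ga)"
  shows "rev_slope k p = N * tfun (k * K1) w / w powr rho"
proof -
  have q: "0 < p/P" using p P_pos by simp
  have "al - ga * rho = - ga" "be - 1 - ga * rho = 0"
    unfolding al_def be_def ga_def rho_def using th0 th1 by (simp_all add: field_simps)
  then have "(p/P) powr al * w powr rho = w" "(p/P) powr (be - 1) * w powr rho = 1"
    unfolding w_def using p P_pos by (simp_all add: powr_powr flip: powr_add)
  then have "rev_slope k p * w powr rho = N * tfun (k * K1) w"
    unfolding rev_slope_def tfun_def by (simp add: algebra_simps)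
  moreover have "w powr rho > 0" unfolding w_def using p P_pos by simp
  ultimately show ?thesis by (simp add: field_simps)
qed

lemma rev_slope_sgn:
  assumes K: "k * K1 < al" and p: "0 < p" "p < P"
  shows "sgn (rev_slope k p) = sgn (vopt k - p)"
proof -
  define w where "w = (p/P) powr (-ga)"
  have w: "0 < w" "1 \<le> w"
    unfolding w_def using powr_less_mono2_neg[of "-ga" "p/P" 1] p P_pos ga_pos by auto
  have "sgn (rev_slope k p) = sgn (tfun (k * K1) w)"
    unfolding rev_slope_tfun[OF p(1)] w_def[symmetric] using N_pos w by (simp add: sgn_mult)
  also have "\<dots> = sgn (w - root (k * K1))" using tfun_sgn K w by simp
  also have "\<dots> = sgn (root (k * K1) powr (-1/ga) - w powr (-1/ga))"
    using sgn_powr_neg_diff[of w "root (k*K1)" "1/ga"] w root_gt1[of "k*K1"] K ga_pos by simp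
  also have "root (k * K1) powr (-1/ga) - w powr (-1/ga) = (vopt k - p) / P"
    unfolding w_def vopt_def using p P_pos ga_pos by (simp add: powr_powr field_simps)
  also have "sgn ((vopt k - p) / P) = sgn (vopt k - p)"
    using P_pos by (simp add: sgn_divide)
  finally show ?thesis .
qed

lemma rev_curve_increasing:
  assumes K: "k * K1 < al" and xy: "0 \<le> x" "x < y" "y \<le> vopt k"
  shows "rev_curve k x < rev_curve k y"
proof (rule DERIV_pos_imp_increasing_open[OF xy(2)])
  fix z assume "x < z" "z < y"
  then have z: "0 < z" "z < P" "z < vopt k" using xy vopt_bounds[OF K] by auto
  then have "rev_slope k z > 0" using rev_slope_sgn[OF K z(1,2)] by (simp add: sgn_if split: if_splits)
  then show "\<exists>d. (rev_curve k has_real_derivative d) (at z) \<and> d > 0"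
    using rev_curve_deriv[OF z(1)] by blast
qed (use xy in \<open>auto intro: continuous_on_subset[OF rev_curve_continuous]\<close>)

lemma rev_curve_decreasing:
  assumes K: "k * K1 < al" and xy: "vopt k \<le> x" "x < y" "y \<le> P"
  shows "rev_curve k y < rev_curve k x"
proof (rule DERIV_neg_imp_decreasing_open[OF xy(2)])
  fix z assume "x < z" "z < y"
  then have z: "0 < z" "z < P" "vopt k < z" using xy vopt_bounds[OF K] by auto
  then have "rev_slope k z < 0" using rev_slope_sgn[OF K z(1,2)] by (simp add: sgn_if split: if_splits)
  then show "\<exists>d. (rev_curve k has_real_derivative d) (at z) \<and> d < 0"
    using rev_curve_deriv[OF z(1)] by blast
qed (use xy vopt_bounds[OF K] in \<open>auto intro: continuous_on_subset[OF rev_curve_continuous]\<close>)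

lemma Rev_unimodal:
  assumes K: "k * K1 < al"
  shows "mono_on ({0..<pmax th Pm} \<inter> {..vopt k}) (Rev N sg th Pm eta k)"
    and "antimono_on ({0..<pmax th Pm} \<inter> {vopt k..}) (Rev N sg th Pm eta k)"
proof -
  show "mono_on ({0..<pmax th Pm} \<inter> {..vopt k}) (Rev N sg th Pm eta k)"
    by (rule monotone_onI) (use rev_curve_increasing[OF K] Rev_closed in
        \<open>fastforce simp: pmax_eq le_less\<close>)
  show "antimono_on ({0..<pmax th Pm} \<inter> {vopt k..}) (Rev N sg th Pm eta k)"
    by (rule monotone_onI) (use rev_curve_decreasing[OF K] Rev_closed in
        \<open>fastforce simp: pmax_eq le_less\<close>)
qed

lemma Rev_critical_iff:
  assumes "k * K1 < al" "0 < p" "p < P"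
  shows "deriv (Rev N sg th Pm eta k) p = 0 \<longleftrightarrow> p = vopt k"
  using DERIV_imp_deriv[OF Rev_deriv[OF assms(2,3)]] rev_slope_sgn[OF assms]
  by (auto simp: sgn_0_0)

context
  fixes k assumes k0: "0 < k" and K: "k * K1 < al"
begin

text \<open>Revenue is negative at price 0 and positive at v, so there is a break-even price in
  (0, v) above which (and below P) revenue is positive.\<close>
lemma break_even_exists:
  "\<exists>r. 0 < r \<and> r < vopt k \<and> (\<forall>p. 0 \<le> p \<and> p < P \<longrightarrow> (rev_curve k p > 0 \<longleftrightarrow> r < p))"
proof -
  have v: "0 < vopt k" "vopt k < P" using vopt_bounds[OF K] by auto
  have R0: "rev_curve k 0 < 0"
    unfolding rev_curve_def using N_pos eta_pos k0 E_pos by (simp add: mult_pos_pos)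
  have RP: "rev_curve k P = 0" unfolding rev_curve_def using P_pos by simp
  have Rv: "rev_curve k (vopt k) > 0"
    using rev_curve_decreasing[OF K order_refl v(2) order_refl] RP by simp
  have "continuous_on {0..vopt k} (rev_curve k)"
    by (rule continuous_on_subset[OF rev_curve_continuous]) auto
  then obtain r where r: "0 \<le> r" "r \<le> vopt k" "rev_curve k r = 0"
    using IVT'[of "rev_curve k" 0 0 "vopt k"] R0 Rv v by auto
  have "rev_curve k p > 0 \<longleftrightarrow> r < p" if p: "0 \<le> p" "p < P" for p
  proof (cases "p \<le> vopt k")
    case True
    consider "p < r" | "p = r" | "r < p" by linarith
    then show ?thesis
    proof cases
      case 1
      then show ?thesis using rev_curve_increasing[OF K p(1) 1 r(2)] r(3) by simp
    next
      case 2
      then show ?thesis using r(3) by simp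
    next
      case 3
      then show ?thesis using rev_curve_increasing[OF K r(1) 3 True] r(3) by simp
    qed
  next
    case False
    then show ?thesis
      using rev_curve_decreasing[OF K, of p P] that RP r by simp
  qed
  moreover have "r \<noteq> 0" "r \<noteq> vopt k" using r R0 Rv by auto
  ultimately show ?thesis using r by (intro exI[of _ r]) auto
qed

definition "pbe = (SOME r. 0 < r \<and> r < vopt k \<and>
                  (\<forall>p. 0 \<le> p \<and> p < P \<longrightarrow> (rev_curve k p > 0 \<longleftrightarrow> r < p)))"

lemma pbe: "0 < pbe" "pbe < vopt k"
  "\<And>p. 0 \<le> p \<Longrightarrow> p < P \<Longrightarrow> rev_curve k p > 0 \<longleftrightarrow> pbe < p"
proof -
  have "0 < pbe \<and> pbe < vopt k \<and> (\<forall>p. 0 \<le> p \<and> p < P \<longrightarrow> (rev_curve k p > 0 \<longleftrightarrow> pbe < p))"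
    unfolding pbe_def by (rule someI_ex[OF break_even_exists])
  then show "0 < pbe" "pbe < vopt k"
    "\<And>p. 0 \<le> p \<Longrightarrow> p < P \<Longrightarrow> rev_curve k p > 0 \<longleftrightarrow> pbe < p"
    by blast+
qed

lemma pbe_lt_P: "pbe < P" using pbe(2) vopt_bounds[OF K] by simp

lemma Feas_eq: "Feas N C sg th Pm eta k kp = {p. pbe < p \<and> pcap \<le> p \<and> p < P}"
proof -
  have "Rev N sg th Pm eta k p > 0 \<longleftrightarrow> pbe < p \<and> p < P" if "0 \<le> p" for p
    using that pbe(3)[of p] Rev_closed[of p k] Rev_outside[of p k] by fastforce
  then show ?thesis
    unfolding Feas_def using Apeak_le_iff pbe(1) by force
qed

lemma Feas_nonempty: "Feas N C sg th Pm eta k kp \<noteq> {}"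
proof -
  have "(max pbe pcap + P) / 2 \<in> Feas N C sg th Pm eta k kp"
    unfolding Feas_eq using pbe_lt_P pcap_lt_P by auto
  then show ?thesis by blast
qed

lemma Feas_connected: "connected (Feas N C sg th Pm eta k kp)"
  unfolding connected_iff_interval Feas_eq by auto

lemma p0_eq: "p0 N C sg th Pm eta k kp = max pbe pcap"
proof (cases "pcap \<le> pbe")
  case True
  then have "Feas N C sg th Pm eta k kp = {pbe<..<P}" unfolding Feas_eq by auto
  then show ?thesis unfolding p0_def using True pbe_lt_P by simp
next
  case False
  then have "Feas N C sg th Pm eta k kp = {pcap..<P}" unfolding Feas_eq by auto
  then show ?thesis unfolding p0_def using False pcap_lt_P by simp
qed

lemma p0_bounds: "0 < p0 N C sg th Pm eta k kp" "p0 N C sg th Pm eta k kp < P"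
  unfolding p0_eq using pbe(1) pbe_lt_P pcap_lt_P by auto

lemma deriv_p0: "deriv (Rev N sg th Pm eta k) (p0 N C sg th Pm eta k kp)
                 = rev_slope k (p0 N C sg th Pm eta k kp)"
  using p0_bounds by (intro DERIV_imp_deriv Rev_deriv)

lemma EqSet_vopt:
  assumes "pcap < vopt k"
  shows "EqSet N C sg th Pm eta k kp = {vopt k}"
proof (rule EqSet_eq_singleton)
  have v: "0 < vopt k" "vopt k < P" using vopt_bounds[OF K] by auto
  then show "vopt k \<in> Feas N C sg th Pm eta k kp"
    unfolding Feas_eq using pbe(2) assms by simp
  fix q assume "q \<in> Feas N C sg th Pm eta k kp" "q \<noteq> vopt k"
  then have q: "0 \<le> q" "q < P" "q \<noteq> vopt k" unfolding Feas_eq using pbe(1) by auto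
  then have "rev_curve k q < rev_curve k (vopt k)"
    using rev_curve_increasing[OF K q(1), of "vopt k"] rev_curve_decreasing[OF K, of "vopt k" q]
    by (cases q "vopt k" rule: linorder_cases) auto
  then show "Rev N sg th Pm eta k q < Rev N sg th Pm eta k (vopt k)"
    using Rev_closed q v by simp
qed

text \<open>Part (ii): a negative slope at p_0 means p_0 lies beyond v, so the capacity
  constraint binds and p_0 = pcap is the unique equilibrium.\<close>
lemma opt_saturated:
  assumes "rev_slope k (p0 N C sg th Pm eta k kp) < 0"
  shows "C < M" "p0 N C sg th Pm eta k kp = pcap"
    "EqSet N C sg th Pm eta k kp = {pcap}"
proof -
  have "vopt k < p0 N C sg th Pm eta k kp"
    using rev_slope_sgn[OF K p0_bounds] assms by (simp add: sgn_if split: if_splits)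
  then have pbe_pcap: "pbe < pcap" "vopt k < pcap" unfolding p0_eq using pbe(2) by auto
  then show p0: "p0 N C sg th Pm eta k kp = pcap" unfolding p0_eq by simp
  show "C < M" using pbe_pcap pbe(1) unfolding pcap_def by (auto split: if_splits)
  show "EqSet N C sg th Pm eta k kp = {pcap}"
  proof (rule EqSet_eq_singleton)
    show "pcap \<in> Feas N C sg th Pm eta k kp" unfolding Feas_eq using pbe_pcap pcap_lt_P by simp
    fix q assume "q \<in> Feas N C sg th Pm eta k kp" "q \<noteq> pcap"
    then have q: "pcap < q" "q < P" unfolding Feas_eq by auto
    then show "Rev N sg th Pm eta k q < Rev N sg th Pm eta k pcap"
      using rev_curve_decreasing[OF K less_imp_le[OF pbe_pcap(2)] q(1) less_imp_le[OF q(2)]]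
        Rev_closed pcap_nonneg pcap_lt_P by simp
  qed
qed

lemma opt_unsaturated:
  assumes "rev_slope k (p0 N C sg th Pm eta k kp) > 0"
  shows "pcap < vopt k"
  using rev_slope_sgn[OF K p0_bounds] assms unfolding p0_eq
  by (simp add: sgn_if split: if_splits)

end

lemma vopt_deriv:
  assumes K: "k * K1 < al"
  shows "\<exists>D > 0. (vopt has_real_derivative D) (at k)"
proof -
  define w where "w = root (k * K1)"
  define Dw where "Dw = inverse (1 + al - rho * w powr (rho - 1))"
  have w1: "1 < w" and Dw: "Dw < 0"
    unfolding w_def Dw_def using root_gt1[of "k*K1"] root_slope[of "k*K1"] K by auto
  have "((\<lambda>k. root (k * K1)) has_real_derivative Dw * K1) (at k)"
    using DERIV_chain2[OF root_deriv[of "k*K1"] DERIV_cmult_right[OF DERIV_ident, of K1]] K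
    unfolding Dw_def w_def by simp
  then have "(vopt has_real_derivative P * ((-1/ga) * w powr (-1/ga - 1) * (Dw * K1))) (at k)"
    unfolding vopt_def w_def using root_gt1[of "k*K1"] K
    by (auto intro!: derivative_eq_intros)
  moreover have "P * ((-1/ga) * w powr (-1/ga - 1) * (Dw * K1)) > 0"
  proof -
    have "(-1/ga) * w powr (-1/ga - 1) < 0" using ga_pos w1 by (simp add: mult_neg_pos)
    moreover have "Dw * K1 < 0" using Dw K1_pos by (simp add: mult_neg_pos)
    ultimately show ?thesis using mult_pos_pos[OF P_pos mult_neg_neg] by blast
  qed
  ultimately show ?thesis by blast
qed

text \<open>In the unsaturated regime the equilibrium price coincides with v for all nearby
  offloading factors, hence inherits its positive derivative.\<close>
lemma eq_price_deriv:
  assumes k0: "0 < ka" and K: "ka * K1 < al" and pv: "pcap < vopt ka"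
  shows "\<exists>D > 0. ((\<lambda>k. eq_price N C sg th Pm eta k kp) has_real_derivative D) (at ka within {0<..1})"
proof -
  obtain D where D: "D > 0" "(vopt has_real_derivative D) (at ka)" using vopt_deriv[OF K] by blast
  have "eventually (\<lambda>k. 0 < k \<and> k * K1 < al \<and> pcap < vopt k) (at ka)"
    using k0 K pv DERIV_isCont[OF D(2)] tendsto_mult_right[OF tendsto_ident_at, of K1 ka UNIV]
    by (intro eventually_conj order_tendstoD tendsto_intros) (auto simp: isCont_def)
  then have "eventually (\<lambda>k. vopt k = eq_price N C sg th Pm eta k kp) (at ka)"
    by eventually_elim (simp add: eq_price_def EqSet_vopt)
  then have near: "eventually (\<lambda>k. vopt k = eq_price N C sg th Pm eta k kp) (nhds ka)"
    using k0 K pv by (simp add: eventually_nhds_conv_at eq_price_def EqSet_vopt)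
  have "((\<lambda>k. eq_price N C sg th Pm eta k kp) has_real_derivative D) (at ka)"
    using DERIV_cong_ev[OF refl near refl] D(2) by simp
  then show ?thesis using D(1) by (blast intro: has_field_derivative_at_within)
qed

end

theorem proposition1:
  fixes N C Pm sg th eta ka kp :: real
  assumes N_pos: "N > 0" and C_pos: "C > 0" and Pm_pos: "Pm > 0"
    and sg: "0 < sg" "sg < 1" and th: "0 < th" "th < 1"
    and eta_pos: "eta > 0"
    and ka: "0 < ka" "ka \<le> 1" and kp: "0 < kp" "kp \<le> 1"
    and eta_bound: "eta < 1 / (ka * Pm powr (1 - th))"
  shows
    "(\<exists>v. mono_on ({0..<pmax th Pm} \<inter> {..v}) (Rev N sg th Pm eta ka)
          \<and> antimono_on ({0..<pmax th Pm} \<inter> {v..}) (Rev N sg th Pm eta ka))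
     \<and> Feas N C sg th Pm eta ka kp \<noteq> {}
     \<and> connected (Feas N C sg th Pm eta ka kp)
     \<and> (deriv (Rev N sg th Pm eta ka) (p0 N C sg th Pm eta ka kp) < 0 \<longrightarrow>
          EqSet N C sg th Pm eta ka kp = {p0 N C sg th Pm eta ka kp}
          \<and> Apeak N sg th Pm kp (p0 N C sg th Pm eta ka kp) = C
          \<and> p0 N C sg th Pm eta ka kp =
              Pm powr th * (1 - C / (kp * N * ((1 - sg) / (2 - sg) * Pm))) powr (th / (2 - sg)))
     \<and> (deriv (Rev N sg th Pm eta ka) (p0 N C sg th Pm eta ka kp) > 0 \<longrightarrow>
          (\<exists>ps. EqSet N C sg th Pm eta ka kp = {ps}
             \<and> Apeak N sg th Pm kp ps \<noteq> C
             \<and> 0 < ps \<and> ps < pmax th Pm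
             \<and> deriv (Rev N sg th Pm eta ka) ps = 0
             \<and> (\<forall>p. 0 < p \<and> p < pmax th Pm \<and> deriv (Rev N sg th Pm eta ka) p = 0 \<longrightarrow> p = ps))
          \<and> (\<exists>D > 0. ((\<lambda>k. eq_price N C sg th Pm eta k kp) has_real_derivative D)
                       (at ka within {0<..1})))"
proof -
  interpret flat_market N C Pm sg th eta kp
    by unfold_locales (use assms in auto)
  let ?R = "Rev N sg th Pm eta ka" and ?p0 = "p0 N C sg th Pm eta ka kp"
  have K: "ka * K1 < al" using eta_bound_iff[OF ka(1)] eta_bound by simp
  have v: "0 < vopt ka" "vopt ka < P" using vopt_bounds[OF K] by auto
  have saturated: "EqSet N C sg th Pm eta ka kp = {?p0} \<and> Apeak N sg th Pm kp ?p0 = C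
      \<and> ?p0 = Pm powr th * (1 - C / (kp * N * ((1 - sg) / (2 - sg) * Pm))) powr (th / (2 - sg))"
    if "deriv ?R ?p0 < 0"
    using opt_saturated[OF ka(1) K] that deriv_p0[OF ka(1) K] Apeak_pcap pcap_formula by simp
  have unsaturated: "pcap < vopt ka" if "deriv ?R ?p0 > 0"
    using opt_unsaturated[OF ka(1) K] that deriv_p0[OF ka(1) K] by simp
  have unsaturated_eq: "\<exists>ps. EqSet N C sg th Pm eta ka kp = {ps} \<and> Apeak N sg th Pm kp ps \<noteq> C
      \<and> 0 < ps \<and> ps < pmax th Pm \<and> deriv ?R ps = 0
      \<and> (\<forall>p. 0 < p \<and> p < pmax th Pm \<and> deriv ?R p = 0 \<longrightarrow> p = ps)"
    if "pcap < vopt ka"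
  proof (intro exI conjI)
    show "EqSet N C sg th Pm eta ka kp = {vopt ka}" using EqSet_vopt[OF ka(1) K that] .
    show "Apeak N sg th Pm kp (vopt ka) \<noteq> C"
      using Apeak_lt_C[OF v(1) less_imp_le[OF v(2)] that] by simp
    show "0 < vopt ka" "vopt ka < pmax th Pm" using v pmax_eq by simp_all
    show "deriv ?R (vopt ka) = 0" using Rev_critical_iff[OF K v] by simp
    show "\<forall>p. 0 < p \<and> p < pmax th Pm \<and> deriv ?R p = 0 \<longrightarrow> p = vopt ka"
      using Rev_critical_iff[OF K] pmax_eq by auto
  qed
  show ?thesis
    using Rev_unimodal[OF K] Feas_nonempty[OF ka(1) K] Feas_connected[OF ka(1) K] saturated
      unsaturated unsaturated_eq eq_price_deriv[OF ka(1) K]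
    by blast
qed

end
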